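(* Consider the Ising model $H(\sigma)=-J\sum_{\langle x,y\rangle}\sigma(x)\sigma(y)$ on the Cayley tree $\tau^k$ with $\theta=\tanh(J\beta)$ and $\alpha=\frac{1-\theta}{1+\theta}$, and let $A\subset N_k=\{1,\dots,k+1\}$ with $|A|=k$. Suppose $\alpha>1$. Then: 1) If $k\le 3$, every $H_A$-weakly periodic Gibbs measure on the invariant set $I_3$ is translation-invariant. 2) If $k=4$, there exists a critical value $\alpha_{cr}$ ($\approx 6.3716$) such that: for $\alpha<\alpha_{cr}$ there is exactly one $H_A$-weakly periodic Gibbs measure on $I_3$; for $\alpha=\alpha_{cr}$ there are exactly three $H_A$-weakly periodic Gibbs measures on $I_3$; for $\alpha>\alpha_{cr}$ there are exactly five $H_A$-weakly periodic Gibbs measures on $I_3$.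
   Context: $\tau^k=(V,L)$ is the Cayley tree of order $k\ge1$ (every vertex has $k+1$ neighbours). Its vertices are identified with the group $G_k$, the free product of $k+1$ cyclic groups of order two with generators $a_1,\dots,a_{k+1}$ ($a_i^2=e$), so that $x,y$ are neighbours iff $x=ya_i$ for some $i$; the root is $e$. For $x\in G_k$, $S(x)$ denotes the set of direct successors of $x$ (neighbours farther from $e$), and $x_\downarrow$ denotes the unique neighbour of $x$ not in $S(x)$. Spins take values $\sigma(x)\in\{-1,1\}$, $J\in\mathbb R$, $\beta=1/T>0$. Gibbs measures are constructed from boundary fields $h=\{h_x\in\mathbb R: x\in G_k\}$ via $\mu_n(\sigma_n)=Z_n^{-1}\exp\{-\beta H(\sigma_n)+\sum_{x\in W_n}h_x\sigma(x)\}$ on balls $V_n$ (with $W_n$ the sphere of radius $n$); these are consistent (and define a limiting Gibbs measure) iff $h_x=\sum_{y\in S(x)}f(h_y,\theta)$ for all $x$, where $f(h,\theta)=\operatorname{arcth}(\theta\tanh h)$. Distinct such $h$ give distinct measures. For $\emptyset\ne A\subseteq N_k$, $H_A=\{x\in G_k:\sum_{i\in A}w_x(a_i)\text{ is even}\}$, where $w_x(a_i)$ is the number of letters $a_i$ in the (reduced) word $x$; it is a normal subgroup of index 2. A collection $h$ is $H_A$-weakly periodic if $h_x$ depends only on whether $x\in H_A$ and whether $x_\downarrow\in H_A$: $h_x=h_1$ if $x\in H_A,x_\downarrow\in H_A$; $h_2$ if $x\in H_A,x_\downarrow\notin H_A$; $h_3$ if $x\notin H_A,x_\downarrow\in H_A$;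 $h_4$ if $x\notin H_A,x_\downarrow\notin H_A$. A Gibbs measure is $H_A$-weakly periodic if it corresponds to such an $h$. For $|A|=k$ the consistency condition becomes the system $h_1=kf(h_3,\theta)$, $h_2=(k-1)f(h_3,\theta)+f(h_1,\theta)$, $h_3=(k-1)f(h_2,\theta)+f(h_4,\theta)$, $h_4=kf(h_2,\theta)$, and $H_A$-weakly periodic Gibbs measures correspond bijectively to its solutions $(h_1,h_2,h_3,h_4)\in\mathbb R^4$. The invariant set is $I_3=\{h\in\mathbb R^4: h_1=-h_4,\ h_2=-h_3\}$; "measures on $I_3$" means those whose solution lies in $I_3$. A measure is translation-invariant if $h_x$ is constant in $x$ (i.e. $h_1=h_2=h_3=h_4$). *)

theory Defs
  imports Complex_Main
begin

definition fI :: "real \<Rightarrow> real \<Rightarrow> real" where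
  "fI h \<theta> = artanh (\<theta> * tanh h)"

definition theta :: "real \<Rightarrow> real \<Rightarrow> real" where
  "theta J \<beta> = tanh (J * \<beta>)"

definition alpha :: "real \<Rightarrow> real \<Rightarrow> real" where
  "alpha J \<beta> = (1 - theta J \<beta>) / (1 + theta J \<beta>)"

text \<open>Consistency system for H_A-weakly periodic boundary fields, |A| = k.
  H_A-weakly periodic Gibbs measures correspond bijectively to its solutions.\<close>
definition wp_system :: "nat \<Rightarrow> real \<Rightarrow> real \<times> real \<times> real \<times> real \<Rightarrow> bool" where
  "wp_system k \<theta> h = (case h of (h1, h2, h3, h4) \<Rightarrow>
      h1 = real k * fI h3 \<theta> \<and>
      h2 = (real k - 1) * fI h3 \<theta> + fI h1 \<theta> \<and>
      h3 = (real k - 1) * fI h2 \<theta> + fI h4 \<theta> \<and>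
      h4 = real k * fI h2 \<theta>)"

definition I3 :: "(real \<times> real \<times> real \<times> real) set" where
  "I3 = {(h1, h2, h3, h4). h1 = - h4 \<and> h2 = - h3}"

definition WP_Gibbs_I3 :: "nat \<Rightarrow> real \<Rightarrow> real \<Rightarrow> (real \<times> real \<times> real \<times> real) set" where
  "WP_Gibbs_I3 k J \<beta> = {h \<in> I3. wp_system k (theta J \<beta>) h}"

definition translation_invariant :: "real \<times> real \<times> real \<times> real \<Rightarrow> bool" where
  "translation_invariant h = (case h of (h1, h2, h3, h4) \<Rightarrow> h1 = h2 \<and> h2 = h3 \<and> h3 = h4)"

end

(* On I3 the consistency system collapses, by oddness of f, to a single equation in y = h2.
   Because exp (2 f(h,theta)) is the image of exp (2h) under the Moebius map
   z |-> (z + alpha) / (alpha z + 1), writing w for the image of exp (2y) turns that equation into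
   the polynomial equation wp_poly k alpha w = 0 on the interval 1/alpha < w < alpha.
   For k <= 3 the polynomial is w^2 - 1 times a negative factor, so w = 1 and the field vanishes.
   For k = 4 it is (w^2 - 1) w^3 times a cubic in s = w + 1/w, so the nontrivial solutions come in
   pairs w, 1/w, one pair for each root s in (2, alpha + 1/alpha) of the cubic. The cubic is
   negative at both ends of this interval, and for alpha > 5/2 its local maximum lies inside it;
   the sign of that maximum is the sign of a quintic in alpha which changes sign exactly once, at
   alpha_cr in (6.37, 6.38). This gives 0, 1 or 2 roots, hence 1, 3 or 5 measures. *)

theory Submission
  imports Defs "HOL-Computational_Algebra.Polynomial"
begin

section \<open>The Moebius form of f\<close>

lemma abs_theta_less_1: "\<bar>theta J \<beta>\<bar> < 1"
  using tanh_real_bounds[of "J * \<beta>"] by (auto simp: theta_def)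

lemma abs_mult_tanh_less_1: "\<bar>\<theta>\<bar> < 1 \<Longrightarrow> \<bar>\<theta> * tanh h\<bar> < (1::real)"
  using abs_mult_less[of \<theta> 1 "tanh h" 1] tanh_real_bounds[of h] by (auto simp: abs_mult)

lemma fI_minus: "\<bar>\<theta>\<bar> < 1 \<Longrightarrow> fI (- h) \<theta> = - fI h \<theta>"
  using abs_mult_tanh_less_1 artanh_minus_real by (simp add: fI_def)

lemma exp_double_artanh:
  fixes v :: real
  shows "\<bar>v\<bar> < 1 \<Longrightarrow> exp (2 * artanh v) = (1 + v) / (1 - v)"
  by (simp add: artanh_def)

definition moebius :: "real \<Rightarrow> real \<Rightarrow> real" where
  "moebius a z = (z + a) / (a * z + 1)"

lemma exp_double_fI:
  assumes "\<bar>\<theta>\<bar> < 1"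
  shows "exp (2 * fI h \<theta>) = moebius ((1 - \<theta>) / (1 + \<theta>)) (exp (2 * h))"
proof -
  define z where "z = exp (2 * h)"
  have pos: "1 + \<theta> > 0" "1 - \<theta> > 0" "z > 0"
    using assms by (auto simp: z_def)
  then have "(1 - \<theta>) * z + (1 + \<theta>) > 0"
    by (simp add: add_pos_pos)
  note pos = pos this
  have "tanh h = (1 - 1 / z) / (1 + 1 / z)"
    by (simp add: tanh_real_altdef z_def exp_minus inverse_eq_divide)
  also have "\<dots> = (z - 1) / (z + 1)"
    using pos by (simp add: divide_simps)
  finally have tanh_z: "tanh h = (z - 1) / (z + 1)" .
  have "exp (2 * fI h \<theta>) = (1 + \<theta> * tanh h) / (1 - \<theta> * tanh h)"
    unfolding fI_def by (rule exp_double_artanh[OF abs_mult_tanh_less_1[OF assms]])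
  also have "\<dots> = moebius ((1 - \<theta>) / (1 + \<theta>)) z"
    using pos unfolding tanh_z by (simp add: moebius_def divide_simps) (simp add: algebra_simps)
  finally show ?thesis
    by (simp add: z_def)
qed

lemma moebius_bounds:
  assumes "a > 1" "z > 0"
  shows "1 / a < moebius a z" "moebius a z < a"
proof -
  have "a * z + 1 > 0" "a * a > 1"
    using assms by (simp_all add: add_pos_pos less_1_mult)
  then show "1 / a < moebius a z" "moebius a z < a"
    using assms by (simp_all add: moebius_def divide_simps) (simp_all add: algebra_simps)
qed

lemma moebius_inverse:
  assumes "a > 1" "z > 0"
  shows "(a - moebius a z) / (a * moebius a z - 1) = z"
proof -
  have "a * z + 1 > 0" "a * a > 1"
    using assms by (simp_all add: add_pos_pos less_1_mult)
  then show ?thesis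
    by (simp add: moebius_def divide_simps) (simp add: algebra_simps)
qed

lemma bij_betw_moebius: "a > 1 \<Longrightarrow> bij_betw (moebius a) {0<..} {1/a<..<a}"
proof (rule bij_betw_byWitness[where f' = "\<lambda>w. (a - w) / (a * w - 1)"])
  assume a: "a > 1"
  then show "\<forall>z\<in>{0<..}. (a - moebius a z) / (a * moebius a z - 1) = z"
    by (simp add: moebius_inverse)
  show "moebius a ` {0<..} \<subseteq> {1/a<..<a}"
    using a moebius_bounds by auto
  show "(\<lambda>w. (a - w) / (a * w - 1)) ` {1/a<..<a} \<subseteq> {0<..}"
    using a by (auto simp: field_simps)
  show "\<forall>w\<in>{1/a<..<a}. moebius a ((a - w) / (a * w - 1)) = w"
  proof
    fix w assume "w \<in> {1/a<..<a}"
    then have "a * w - 1 > 0" "a * a > 1"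
      using a by (auto simp: field_simps less_1_mult)
    then show "moebius a ((a - w) / (a * w - 1)) = w"
      by (simp add: moebius_def divide_simps) (simp add: algebra_simps)
  qed
qed

lemma bij_betw_moebius_exp:
  assumes "a > 1"
  shows "bij_betw (\<lambda>y. moebius a (exp (2 * y))) UNIV {1/a<..<a}"
proof -
  have "bij_betw (\<lambda>y::real. exp (2 * y)) UNIV {0<..}"
    by (rule bij_betw_byWitness[where f' = "\<lambda>z. ln z / 2"]) auto
  from bij_betw_trans[OF this bij_betw_moebius[OF assms]] show ?thesis
    by (simp add: comp_def)
qed

section \<open>Reduction to a polynomial equation\<close>

definition sym_field :: "nat \<Rightarrow> real \<Rightarrow> real \<Rightarrow> real \<times> real \<times> real \<times> real" where
  "sym_field k \<theta> y = (- (real k * fI y \<theta>), y, - y, real k * fI y \<theta>)"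

definition sym_residual :: "nat \<Rightarrow> real \<Rightarrow> real \<Rightarrow> real" where
  "sym_residual k \<theta> y = y + (real k - 1) * fI y \<theta> + fI (real k * fI y \<theta>) \<theta>"

lemma I3_solutions_eq_image:
  assumes "\<bar>\<theta>\<bar> < 1"
  shows "{h \<in> I3. wp_system k \<theta> h} = sym_field k \<theta> ` {y. sym_residual k \<theta> y = 0}"
  using fI_minus[OF assms]
  by (force simp: I3_def wp_system_def sym_field_def sym_residual_def)

text \<open>With z = exp (2y) and w = moebius a z, the exponential of twice the residual is
  z w^(k-1) moebius a (w^k), where z = (a - w) / (a w - 1); it equals 1 exactly when wp_poly
  vanishes, because the denominators are positive.\<close>

definition wp_poly :: "nat \<Rightarrow> real \<Rightarrow> real \<Rightarrow> real" where
  "wp_poly k a w = (a - w) * w ^ (k - 1) * (w ^ k + a) - (a * w - 1) * (a * w ^ k + 1)"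

lemma sym_residual_eq_0_iff:
  assumes "\<bar>\<theta>\<bar> < 1" "k \<ge> 1" and a: "a = (1 - \<theta>) / (1 + \<theta>)" "a > 1"
  shows "sym_residual k \<theta> y = 0 \<longleftrightarrow> wp_poly k a (moebius a (exp (2 * y))) = 0"
proof -
  define z where "z = exp (2 * y)"
  define w where "w = moebius a z"
  have z: "z > 0"
    by (simp add: z_def)
  have exp_f: "exp (2 * fI x \<theta>) = moebius a (exp (2 * x))" for x
    unfolding a(1) by (rule exp_double_fI[OF assms(1)])
  have exp_fy: "exp (real m * (2 * fI y \<theta>)) = w ^ m" for m
    by (simp add: exp_of_nat_mult exp_f w_def z_def)
  have exp_fk: "exp (2 * fI (real k * fI y \<theta>) \<theta>) = moebius a (w ^ k)"
    using exp_f[of "real k * fI y \<theta>"] exp_fy[of k] by (simp add: mult.left_commute)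
  have z_eq: "z = (a - w) / (a * w - 1)"
    using moebius_inverse[OF a(2) z] by (simp add: w_def)
  have "exp (2 * sym_residual k \<theta> y)
      = z * exp (real (k - 1) * (2 * fI y \<theta>)) * exp (2 * fI (real k * fI y \<theta>) \<theta>)"
    using assms(2) by (simp add: sym_residual_def z_def of_nat_diff exp_add[symmetric] algebra_simps)
  also have "\<dots> = (a - w) * w ^ (k - 1) * (w ^ k + a) / ((a * w - 1) * (a * w ^ k + 1))"
    unfolding exp_fy exp_fk z_eq by (simp add: moebius_def)
  finally have exp_res: "exp (2 * sym_residual k \<theta> y)
      = (a - w) * w ^ (k - 1) * (w ^ k + a) / ((a * w - 1) * (a * w ^ k + 1))" .
  have "1 / a < w"
    using moebius_bounds[OF a(2) z] by (simp add: w_def)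
  moreover have "1 / a > 0"
    using a(2) by simp
  ultimately have "w > 0" "a * w - 1 > 0"
    using a(2) by (linarith, simp add: field_simps)
  moreover from this have "a * w ^ k + 1 > 0"
    using a(2) by (simp add: add_pos_pos)
  ultimately have "exp (2 * sym_residual k \<theta> y) = 1 \<longleftrightarrow> wp_poly k a w = 0"
    by (auto simp: exp_res wp_poly_def)
  then show ?thesis
    by (simp add: w_def z_def)
qed

lemma bij_betw_sym_residual_roots:
  assumes "\<bar>\<theta>\<bar> < 1" "k \<ge> 1" "a = (1 - \<theta>) / (1 + \<theta>)" "a > 1"
  shows "bij_betw (\<lambda>y. moebius a (exp (2 * y)))
           {y. sym_residual k \<theta> y = 0} {w \<in> {1/a<..<a}. wp_poly k a w = 0}"
proof (rule bij_betw_subset[OF bij_betw_moebius_exp[OF assms(4)]])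
  have "{w \<in> {1/a<..<a}. wp_poly k a w = 0}
      = {w \<in> (\<lambda>y. moebius a (exp (2 * y))) ` UNIV. wp_poly k a w = 0}"
    using bij_betw_imp_surj_on[OF bij_betw_moebius_exp[OF assms(4)]] by simp
  then show "(\<lambda>y. moebius a (exp (2 * y))) ` {y. sym_residual k \<theta> y = 0}
      = {w \<in> {1/a<..<a}. wp_poly k a w = 0}"
    using sym_residual_eq_0_iff[OF assms] by auto
qed simp

lemma card_I3_solutions:
  assumes "\<bar>\<theta>\<bar> < 1" "k \<ge> 1" "a = (1 - \<theta>) / (1 + \<theta>)" "a > 1"
  shows "card {h \<in> I3. wp_system k \<theta> h} = card {w \<in> {1/a<..<a}. wp_poly k a w = 0}"
proof -
  have "inj (sym_field k \<theta>)"
    by (rule injI) (simp add: sym_field_def)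
  then have "card {h \<in> I3. wp_system k \<theta> h} = card {y. sym_residual k \<theta> y = 0}"
    unfolding I3_solutions_eq_image[OF assms(1)] by (simp add: card_image inj_on_subset)
  also have "\<dots> = card {w \<in> {1/a<..<a}. wp_poly k a w = 0}"
    by (rule bij_betw_same_card[OF bij_betw_sym_residual_roots[OF assms]])
  finally show ?thesis .
qed

section \<open>The case k \<le> 3\<close>

lemma wp_poly_eq_0_imp_eq_1:
  fixes a w :: real
  assumes "a > 1" "w > 0" "k \<in> {1, 2, 3}" "wp_poly k a w = 0"
  shows "w = 1"
proof -
  obtain Q where Q: "wp_poly k a w = (w\<^sup>2 - 1) * Q" "Q < 0"
  proof -
    consider "k = 1" | "k = 2" | "k = 3"
      using assms(3) by auto
    then show thesis
    proof cases
      case 1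
      have "wp_poly k a w = (w\<^sup>2 - 1) * (- (1 + a\<^sup>2))"
        by (simp add: 1 wp_poly_def power2_eq_square algebra_simps)
      moreover have "- (1 + a\<^sup>2) < 0"
        using zero_le_power2[of a] by linarith
      ultimately show thesis
        by (rule that)
    next
      case 2
      have "wp_poly k a w = (w\<^sup>2 - 1) * ((a - a\<^sup>2) * w - (w\<^sup>2 + 1))"
        by (simp add: 2 wp_poly_def power2_eq_square power3_eq_cube algebra_simps)
      moreover have "(a - a\<^sup>2) * w < 0"
        using assms(1,2) by (intro mult_neg_pos) (simp_all add: power2_eq_square)
      then have "(a - a\<^sup>2) * w - (w\<^sup>2 + 1) < 0"
        using zero_le_power2[of w] by linarith
      ultimately show thesis
        by (rule that)
    next
      case 3
      define Q where "Q = a * w ^ 3 + a * w - a\<^sup>2 * w\<^sup>2 - (w ^ 4 + w\<^sup>2 + 1)"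
      have "wp_poly k a w = (w\<^sup>2 - 1) * Q"
        by (simp add: 3 Q_def wp_poly_def power2_eq_square power3_eq_cube power_numeral_reduce
            algebra_simps)
      moreover have "4 * Q = - (2 * a * w - (w\<^sup>2 + 1))\<^sup>2 - (3 * w ^ 4 + 2 * w\<^sup>2 + 3)"
        by (simp add: Q_def power2_eq_square power3_eq_cube power_numeral_reduce algebra_simps)
      then have "Q < 0"
        using zero_le_power2[of "2 * a * w - (w\<^sup>2 + 1)"] zero_le_power2[of w]
          zero_le_power[of w 4] assms(2) by linarith
      ultimately show thesis
        by (rule that)
    qed
  qed
  then have "(w - 1) * (w + 1) = 0"
    using assms(4) by (simp add: power2_eq_square algebra_simps)
  then show "w = 1"
    using assms(2) by simp
qed

lemma I3_solution_translation_invariant: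
  assumes "k \<in> {1, 2, 3}" "\<bar>\<theta>\<bar> < 1" "(1 - \<theta>) / (1 + \<theta>) > 1"
    and "h \<in> I3" "wp_system k \<theta> h"
  shows "translation_invariant h"
proof -
  define a where "a = (1 - \<theta>) / (1 + \<theta>)"
  have a: "a > 1"
    using assms(3) by (simp add: a_def)
  obtain y where y: "sym_residual k \<theta> y = 0" "h = sym_field k \<theta> y"
    using assms(4,5) I3_solutions_eq_image[OF assms(2)] by blast
  have k: "k \<ge> 1"
    using assms(1) by auto
  have "1 / a < moebius a (exp (2 * y))" "1 / a > 0"
    using moebius_bounds[OF a] a by simp_all
  then have pos: "moebius a (exp (2 * y)) > 0"
    by linarith
  have "wp_poly k a (moebius a (exp (2 * y))) = 0"
    using sym_residual_eq_0_iff[OF assms(2) k a_def a] y(1) by simp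
  then have "moebius a (exp (2 * y)) = 1"
    by (rule wp_poly_eq_0_imp_eq_1[OF a pos assms(1)])
  also have "1 = moebius a (exp (2 * 0))"
    using a by (simp add: moebius_def add.commute)
  finally have "y = 0"
    by (rule injD[OF bij_betw_imp_inj_on[OF bij_betw_moebius_exp[OF a]]])
  then show ?thesis
    by (simp add: y(2) sym_field_def translation_invariant_def fI_def)
qed

section \<open>The case k = 4: reduction to a cubic\<close>

text \<open>wp_poly 4 a w is (w^2 - 1) times a palindromic sextic, which is w^3 times this cubic in
  s = w + 1/w (see wp_poly_4_eq).\<close>

definition cubic :: "real \<Rightarrow> real \<Rightarrow> real" where
  "cubic a s = a * s\<^sup>2 + 2 * s - a - a\<^sup>2 - s ^ 3"

definition cubic_roots :: "real \<Rightarrow> real set" where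
  "cubic_roots a = {s. 2 < s \<and> s < a + 1 / a \<and> cubic a s = 0}"

lemma cubic_eq_poly: "cubic a = poly [:- a - a\<^sup>2, 2, a, -1:]"
  by (simp add: cubic_def fun_eq_iff power2_eq_square power3_eq_cube algebra_simps)

lemma finite_cubic_zeros: "finite {s. cubic a s = 0}"
  unfolding cubic_eq_poly by (rule poly_roots_finite) simp

lemma card_cubic_zeros_le_3: "card {s. cubic a s = 0} \<le> 3"
  unfolding cubic_eq_poly using card_poly_roots_bound[of "[:- a - a\<^sup>2, 2, a, -1:]"] by simp

lemma finite_cubic_roots: "finite (cubic_roots a)"
  using finite_cubic_zeros by (rule finite_subset[rotated]) (auto simp: cubic_roots_def)

lemma wp_poly_4_eq:
  assumes "w \<noteq> 0"
  shows "wp_poly 4 a w = (w\<^sup>2 - 1) * w ^ 3 * cubic a (w + 1 / w)"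
proof -
  have homog: "w ^ 3 * cubic a s = a * w * (w * s)\<^sup>2 + 2 * w\<^sup>2 * (w * s) - (a + a\<^sup>2) * w ^ 3 - (w * s) ^ 3"
    for s by (simp add: cubic_def power2_eq_square power3_eq_cube algebra_simps)
  have "w * (w + 1 / w) = w\<^sup>2 + 1"
    using assms by (simp add: field_simps power2_eq_square)
  then have "(w\<^sup>2 - 1) * w ^ 3 * cubic a (w + 1 / w) = (w\<^sup>2 - 1) *
      (a * w * (w\<^sup>2 + 1)\<^sup>2 + 2 * w\<^sup>2 * (w\<^sup>2 + 1) - (a + a\<^sup>2) * w ^ 3 - (w\<^sup>2 + 1) ^ 3)"
    by (simp only: mult.assoc homog)
  also have "\<dots> = wp_poly 4 a w"
    by (simp add: wp_poly_def power2_eq_square power3_eq_cube power_numeral_reduce algebra_simps)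
  finally show ?thesis ..
qed

lemma plus_inverse_less_iff:
  fixes a w :: real
  assumes "a > 1" "w > 0"
  shows "w + 1 / w < a + 1 / a \<longleftrightarrow> 1 / a < w \<and> w < a"
proof -
  have aw: "a * w > 0"
    using assms by simp
  have "w + 1 / w < a + 1 / a \<longleftrightarrow> w + 1 / w - (a + 1 / a) < 0"
    by simp
  also have "w + 1 / w - (a + 1 / a) = (w - a) * (a * w - 1) / (a * w)"
    using assms by (simp add: field_simps)
  also have "\<dots> < 0 \<longleftrightarrow> (w - a) * (a * w - 1) < 0"
    using aw by (auto simp: divide_less_0_iff)
  also have "\<dots> \<longleftrightarrow> 1 / a < w \<and> w < a"
  proof -
    have "1 / a < w \<longleftrightarrow> a * w - 1 > 0"
      using assms(1) by (simp add: divide_less_eq mult.commute)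
    moreover have "a < w \<Longrightarrow> a * w - 1 > 0"
      using assms(1) less_1_mult[of a w] by simp
    ultimately show ?thesis
      by (auto simp: mult_less_0_iff)
  qed
  finally show ?thesis .
qed

lemma plus_inverse_gt_2_iff:
  fixes w :: real
  assumes "w > 0"
  shows "2 < w + 1 / w \<longleftrightarrow> w \<noteq> 1"
proof -
  have "w + 1 / w - 2 = (w - 1)\<^sup>2 / w"
    using assms by (simp add: field_simps power2_eq_square)
  moreover have "(w - 1)\<^sup>2 / w > 0 \<longleftrightarrow> w \<noteq> 1"
    using assms by (simp add: zero_less_divide_iff)
  ultimately show ?thesis
    by linarith
qed

definition plus_inverse_root :: "real \<Rightarrow> real" where
  "plus_inverse_root s = (s + sqrt (s\<^sup>2 - 4)) / 2"

lemma plus_inverse_root: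
  assumes "s > 2"
  shows "plus_inverse_root s > 1" "plus_inverse_root s + 1 / plus_inverse_root s = s"
proof -
  define r where "r = sqrt (s\<^sup>2 - 4)"
  have "s\<^sup>2 > 4"
    using power_strict_mono[of 2 s 2] assms by simp
  then have r: "r > 0" "r\<^sup>2 = s\<^sup>2 - 4"
    by (simp_all add: r_def)
  then show "plus_inverse_root s > 1"
    using assms by (simp add: plus_inverse_root_def r_def[symmetric])
  have "(s + r) * (s - r) = 4"
    using r by (simp add: power2_eq_square algebra_simps)
  then show "plus_inverse_root s + 1 / plus_inverse_root s = s"
    using r assms by (simp add: plus_inverse_root_def r_def[symmetric] field_simps)
qed

lemma plus_inverse_eq_iff:
  assumes "s > 2" "w > 0"
  shows "w + 1 / w = s \<longleftrightarrow> w = plus_inverse_root s \<or> w = 1 / plus_inverse_root s"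
proof -
  define \<rho> where "\<rho> = plus_inverse_root s"
  have \<rho>: "\<rho> > 1" "\<rho> + 1 / \<rho> = s"
    using plus_inverse_root[OF assms(1)] by (simp_all add: \<rho>_def)
  have "(w - \<rho>) * (w - 1 / \<rho>) = w * w - (\<rho> + 1 / \<rho>) * w + 1"
    using \<rho>(1) by (simp add: field_simps)
  also have "\<dots> = w * (w + 1 / w - s)"
    using \<rho>(2) assms(2) by (simp add: field_simps)
  finally have "w + 1 / w = s \<longleftrightarrow> (w - \<rho>) * (w - 1 / \<rho>) = 0"
    using assms(2) by simp
  then show ?thesis
    by (simp add: \<rho>_def)
qed

lemma plus_inverse_preimage_eq:
  assumes "\<And>s. s \<in> A \<Longrightarrow> s > 2"
  shows "{w. w > 0 \<and> w + 1 / w \<in> A} = plus_inverse_root ` A \<union> (\<lambda>s. 1 / plus_inverse_root s) ` A"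
proof (intro set_eqI iffI)
  fix w assume "w \<in> {w. w > 0 \<and> w + 1 / w \<in> A}"
  then show "w \<in> plus_inverse_root ` A \<union> (\<lambda>s. 1 / plus_inverse_root s) ` A"
    using plus_inverse_eq_iff[OF assms, of "w + 1 / w" w] by auto
next
  fix w assume "w \<in> plus_inverse_root ` A \<union> (\<lambda>s. 1 / plus_inverse_root s) ` A"
  moreover have "plus_inverse_root s > 0" if "s \<in> A" for s
    using plus_inverse_root(1)[OF assms[OF that]] by simp
  ultimately show "w \<in> {w. w > 0 \<and> w + 1 / w \<in> A}"
    using plus_inverse_root(2)[OF assms] by (auto simp: add.commute)
qed

lemma card_plus_inverse_preimage:
  fixes A :: "real set"
  assumes "finite A" "\<And>s. s \<in> A \<Longrightarrow> s > 2"
  shows "card {w. w > 0 \<and> w + 1 / w \<in> A} = 2 * card A"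
proof -
  define \<rho> where "\<rho> = plus_inverse_root"
  have \<rho>: "\<rho> s > 1" "\<rho> s + 1 / \<rho> s = s" if "s \<in> A" for s
    using plus_inverse_root assms(2)[OF that] by (auto simp: \<rho>_def)
  have inj: "inj_on \<rho> A"
  proof (rule inj_onI)
    fix s t assume "s \<in> A" "t \<in> A" "\<rho> s = \<rho> t"
    then show "s = t"
      using \<rho>(2) by metis
  qed
  then have "inj_on (\<lambda>s. 1 / \<rho> s) A"
    by (simp add: inj_on_def)
  moreover have "\<rho> s \<noteq> 1 / \<rho> t" if "s \<in> A" "t \<in> A" for s t
    using \<rho>(1)[OF that(1)] \<rho>(1)[OF that(2)] less_1_mult[of "\<rho> s" "\<rho> t"] by (simp add: field_simps)
  then have "\<rho> ` A \<inter> (\<lambda>s. 1 / \<rho> s) ` A = {}"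
    by blast
  ultimately show ?thesis
    using assms inj by (simp add: plus_inverse_preimage_eq \<rho>_def[symmetric] card_Un_disjoint card_image)
qed

lemma wp_poly_4_zeros_eq:
  assumes "a > 1"
  shows "{w \<in> {1/a<..<a}. wp_poly 4 a w = 0} = insert 1 {w. w > 0 \<and> w + 1 / w \<in> cubic_roots a}"
proof (intro set_eqI iffI)
  fix w assume w: "w \<in> {w \<in> {1/a<..<a}. wp_poly 4 a w = 0}"
  have "1 / a > 0" "1 / a < w"
    using assms w by simp_all
  then have pos: "w > 0"
    by linarith
  then have "w\<^sup>2 = 1 \<or> cubic a (w + 1 / w) = 0"
    using w wp_poly_4_eq[of w a] by auto
  then show "w \<in> insert 1 {w. w > 0 \<and> w + 1 / w \<in> cubic_roots a}"
    using pos w plus_inverse_gt_2_iff[OF pos] plus_inverse_less_iff[OF assms pos]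
    by (auto simp: cubic_roots_def power2_eq_1_iff)
next
  fix w assume "w \<in> insert 1 {w. w > 0 \<and> w + 1 / w \<in> cubic_roots a}"
  then consider "w = 1" | "w > 0" "w + 1 / w \<in> cubic_roots a"
    by blast
  then show "w \<in> {w \<in> {1/a<..<a}. wp_poly 4 a w = 0}"
  proof cases
    case 1
    then show ?thesis
      using assms by (simp add: wp_poly_def)
  next
    case 2
    then show ?thesis
      using plus_inverse_less_iff[OF assms 2(1)] wp_poly_4_eq[of w a] by (simp add: cubic_roots_def)
  qed
qed

lemma card_wp_poly_4_zeros:
  assumes "a > 1"
  shows "card {w \<in> {1/a<..<a}. wp_poly 4 a w = 0} = 1 + 2 * card (cubic_roots a)"
proof -
  have gt2: "\<And>s. s \<in> cubic_roots a \<Longrightarrow> s > 2"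
    by (simp add: cubic_roots_def)
  have "card {w. w > 0 \<and> w + 1 / w \<in> cubic_roots a} = 2 * card (cubic_roots a)"
    by (rule card_plus_inverse_preimage[OF finite_cubic_roots gt2])
  moreover have "finite {w. w > 0 \<and> w + 1 / w \<in> cubic_roots a}"
    using finite_cubic_roots by (simp add: plus_inverse_preimage_eq[OF gt2])
  moreover have "1 \<notin> {w. w > 0 \<and> w + 1 / w \<in> cubic_roots a}"
    using gt2 by fastforce
  ultimately show ?thesis
    unfolding wp_poly_4_zeros_eq[OF assms] by simp
qed

lemma card_WP_Gibbs_I3_4:
  assumes "alpha J \<beta> > 1"
  shows "card (WP_Gibbs_I3 4 J \<beta>) = 1 + 2 * card (cubic_roots (alpha J \<beta>))"
proof -
  have "card (WP_Gibbs_I3 4 J \<beta>) = card {w \<in> {1/alpha J \<beta><..<alpha J \<beta>}. wp_poly 4 (alpha J \<beta>) w = 0}"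
    unfolding WP_Gibbs_I3_def
    by (rule card_I3_solutions[OF abs_theta_less_1 _ alpha_def assms]) simp
  also have "\<dots> = 1 + 2 * card (cubic_roots (alpha J \<beta>))"
    by (rule card_wp_poly_4_zeros[OF assms])
  finally show ?thesis .
qed

section \<open>Counting the roots of the cubic\<close>

lemma continuous_on_cubic: "continuous_on A (cubic a)"
  unfolding cubic_def by (intro continuous_intros)

lemma sign_change_imp_zero:
  fixes f :: "real \<Rightarrow> real"
  assumes "continuous_on {s..t} f" "s < t" "f s * f t < 0"
  obtains r where "s < r" "r < t" "f r = 0"
proof -
  have "\<exists>r. s \<le> r \<and> r \<le> t \<and> f r = 0"
  proof (cases "f s < 0")
    case True
    then have "0 < f t"
      using assms(3) by (simp add: mult_less_0_iff)
    with True show ?thesis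
      using assms(1,2) by (intro IVT') simp_all
  next
    case False
    then have "f t < 0" "0 < f s"
      using assms(3) by (auto simp: mult_less_0_iff)
    then show ?thesis
      using assms(1,2) by (intro IVT2') simp_all
  qed
  then obtain r where "s \<le> r" "r \<le> t" "f r = 0"
    by blast
  moreover have "r \<noteq> s" "r \<noteq> t"
    using assms(3) \<open>f r = 0\<close> by auto
  ultimately show thesis
    using that by force
qed

lemma cubic_2_neg: "cubic a 2 < 0"
proof -
  have "4 * cubic a 2 = - (2 * a - 3)\<^sup>2 - 7"
    by (simp add: cubic_def power2_eq_square algebra_simps)
  then show ?thesis
    using zero_le_power2[of "2 * a - 3"] by linarith
qed

lemma cubic_plus_inverse_neg:
  assumes "a > 0"
  shows "cubic a (a + 1 / a) < 0"
proof -
  have "cubic a (a + 1 / a) = - a\<^sup>2 - 1 / a ^ 3"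
    using assms by (simp add: cubic_def field_simps power2_eq_square power3_eq_cube)
  moreover have "1 / a ^ 3 > 0"
    using assms by simp
  ultimately show ?thesis
    using zero_le_power2[of a] by linarith
qed

lemma cubic_neg_if_le_5_2:
  assumes "1 < a" "a \<le> 5/2" "s > 2"
  shows "cubic a s < 0"
proof -
  have "a * (s + 2) \<le> 5/2 * (s + 2)"
    using assms by (intro mult_right_mono) auto
  moreover have "(s - 2) * (s + 3/2) > 0"
    using assms by simp
  moreover have "5/2 * (s + 2) + 2 - (s\<^sup>2 + 2 * s + 4) = - ((s - 2) * (s + 3/2))"
    by (simp add: power2_eq_square field_simps)
  ultimately have "a * (s + 2) + 2 - (s\<^sup>2 + 2 * s + 4) < 0"
    by linarith
  then have "(s - 2) * (a * (s + 2) + 2 - (s\<^sup>2 + 2 * s + 4)) < 0"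
    using assms(3) by (simp add: mult_pos_neg)
  moreover have "cubic a s - cubic a 2 = (s - 2) * (a * (s + 2) + 2 - (s\<^sup>2 + 2 * s + 4))"
    by (simp add: cubic_def power2_eq_square power3_eq_cube algebra_simps)
  ultimately show ?thesis
    using cubic_2_neg[of a] by linarith
qed

text \<open>The larger root of the derivative 2 a s + 2 - 3 s^2, i.e. the local maximum of the cubic.\<close>

definition cubic_crit :: "real \<Rightarrow> real" where
  "cubic_crit a = (a + sqrt (a\<^sup>2 + 6)) / 3"

lemma abs_less_sqrt_power2_add: "c > 0 \<Longrightarrow> \<bar>a\<bar> < sqrt (a\<^sup>2 + c)"
  using real_sqrt_less_mono[of "a\<^sup>2" "a\<^sup>2 + c"] by simp

lemma cubic_less_cubic_crit:
  assumes "s \<ge> 0" "s \<noteq> cubic_crit a"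
  shows "cubic a s < cubic a (cubic_crit a)"
proof -
  define q where "q = sqrt (a\<^sup>2 + 6)"
  define p where "p = cubic_crit a"
  have q: "q\<^sup>2 = a\<^sup>2 + 6" "\<bar>a\<bar> < q"
    using abs_less_sqrt_power2_add[of 6 a] by (simp_all add: q_def)
  have p_eq: "p = (a + q) / 3"
    by (simp add: p_def cubic_crit_def q_def)
  have "3 * p\<^sup>2 = 2 * a * p + 2"
    using q(1) unfolding p_eq by (simp add: power2_eq_square field_simps)
  moreover have "cubic a s - cubic a p
      = (s - p)\<^sup>2 * (a - 2 * p - s) + (s - p) * (2 * a * p + 2 - 3 * p\<^sup>2)"
    by (simp add: cubic_def power2_eq_square power3_eq_cube algebra_simps)
  ultimately have "cubic a s - cubic a p = (s - p)\<^sup>2 * (a - 2 * p - s)"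
    by simp
  moreover have "a - 2 * p - s < 0"
    using q(2) assms(1) unfolding p_eq by (simp add: abs_less_iff field_simps)
  moreover have "(s - p)\<^sup>2 > 0"
    using assms(2) by (simp add: p_def)
  ultimately show ?thesis
    using mult_pos_neg[of "(s - p)\<^sup>2" "a - 2 * p - s"] by (simp add: p_def)
qed

lemma cubic_crit_bounds:
  assumes "a > 5/2"
  shows "2 < cubic_crit a" "cubic_crit a < a + 1 / a"
proof -
  define q where "q = sqrt (a\<^sup>2 + 6)"
  have q: "q\<^sup>2 = a\<^sup>2 + 6" "q \<ge> 0"
    by (simp_all add: q_def)
  have p_eq: "cubic_crit a = (a + q) / 3"
    by (simp add: cubic_crit_def q_def)
  have "(6 - a)\<^sup>2 < q\<^sup>2"
    unfolding q(1) using assms by (simp add: power2_eq_square algebra_simps)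
  then have "6 - a < q"
    using q(2) by (rule power2_less_imp_less)
  then show "2 < cubic_crit a"
    unfolding p_eq by simp
  have "(2 * a + 3 / a)\<^sup>2 = 4 * a\<^sup>2 + 12 + 9 / a\<^sup>2"
    using assms by (simp add: power2_eq_square field_simps)
  moreover have "9 / a\<^sup>2 > 0"
    using assms by simp
  ultimately have "q\<^sup>2 < (2 * a + 3 / a)\<^sup>2"
    using q(1) zero_le_power2[of a] by linarith
  then have "q < 2 * a + 3 / a"
    by (rule power2_less_imp_less) (use assms in \<open>simp add: add_nonneg_nonneg\<close>)
  then have "(a + q) / 3 < (a + (2 * a + 3 / a)) / 3"
    by (simp add: divide_strict_right_mono)
  also have "\<dots> = a + 1 / a"
    using assms by (simp add: field_simps)
  finally show "cubic_crit a < a + 1 / a"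
    unfolding p_eq .
qed

text \<open>Up to a positive factor this is the value of the cubic at its local maximum
  (sgn_cubic_crit); its sign change locates the critical value alpha_cr.\<close>

definition disc :: "real \<Rightarrow> real" where
  "disc a = 4 * a ^ 5 - 23 * a ^ 4 - 18 * a ^ 3 + 13 * a\<^sup>2 + 32"

lemma sgn_cubic_crit:
  assumes "a > 0"
  shows "sgn (cubic a (cubic_crit a)) = sgn (disc a)"
proof -
  define q where "q = sqrt (a\<^sup>2 + 6)"
  define Y where "Y = - 2 * a ^ 3 + 27 * a\<^sup>2 + 9 * a"
  have q: "q\<^sup>2 = a\<^sup>2 + 6" "a < q"
    using abs_less_sqrt_power2_add[of 6 a] by (simp_all add: q_def)
  have p_eq: "cubic_crit a = (a + q) / 3"
    by (simp add: cubic_crit_def q_def)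
  have "27 * cubic a (cubic_crit a) = 2 * q * (a\<^sup>2 + 6) - Y - q * (q\<^sup>2 - a\<^sup>2 - 6)"
    unfolding p_eq by (simp add: cubic_def Y_def power2_eq_square power3_eq_cube field_simps)
  then have crit: "27 * cubic a (cubic_crit a) = 2 * q * (a\<^sup>2 + 6) - Y"
    using q(1) by simp
  have "27 * disc a = (2 * q * (a\<^sup>2 + 6))\<^sup>2 - Y\<^sup>2"
    unfolding power_mult_distrib q(1) by (simp add: Y_def disc_def power2_eq_square power3_eq_cube
        power_numeral_reduce algebra_simps)
  also have "\<dots> = (2 * q * (a\<^sup>2 + 6) - Y) * (2 * q * (a\<^sup>2 + 6) + Y)"
    by (simp add: power2_eq_square algebra_simps)
  finally have "disc a = cubic a (cubic_crit a) * (2 * q * (a\<^sup>2 + 6) + Y)"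
    unfolding crit[symmetric] by simp
  moreover have "2 * q * (a\<^sup>2 + 6) + Y > 0"
  proof -
    have "a ^ 3 < q ^ 3"
      using q(2) assms by (intro power_strict_mono) simp_all
    then have "0 < 2 * (q ^ 3 - a ^ 3) + 27 * a\<^sup>2 + 9 * a"
      using assms zero_le_power2[of a] by (smt (verit))
    moreover have "2 * q * (a\<^sup>2 + 6) + Y = 2 * (q ^ 3 - a ^ 3) + 27 * a\<^sup>2 + 9 * a"
      using q(1) by (simp add: Y_def power2_eq_square power3_eq_cube algebra_simps)
    ultimately show ?thesis
      by simp
  qed
  ultimately show ?thesis
    by (simp add: sgn_mult)
qed

lemma card_cubic_roots_if_crit_pos:
  assumes a: "a > 5/2" and pos: "cubic a (cubic_crit a) > 0"
  shows "card (cubic_roots a) = 2"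
proof -
  define p where "p = cubic_crit a"
  have p: "2 < p" "p < a + 1 / a"
    using cubic_crit_bounds[OF a] by (simp_all add: p_def)
  have "cubic a 2 * cubic a p < 0" "cubic a p * cubic a (a + 1 / a) < 0"
    using cubic_2_neg[of a] cubic_plus_inverse_neg[of a] a pos
    by (simp_all add: p_def mult_neg_pos mult_pos_neg)
  then obtain r1 r2 where r1: "2 < r1" "r1 < p" "cubic a r1 = 0"
    and r2: "p < r2" "r2 < a + 1 / a" "cubic a r2 = 0"
    using p sign_change_imp_zero[OF continuous_on_cubic] by metis
  have "cubic a (- a - 2) = 2 * a ^ 3 + 9 * a\<^sup>2 + 13 * a + 4"
    by (simp add: cubic_def power2_eq_square power3_eq_cube algebra_simps)
  then have "cubic a (- a - 2) * cubic a 2 < 0"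
    using a cubic_2_neg[of a] by (simp add: add_pos_pos mult_pos_neg)
  then obtain r0 where r0: "r0 < 2" "cubic a r0 = 0"
    using a sign_change_imp_zero[OF continuous_on_cubic, of "- a - 2" 2 a] by auto
  have "cubic_roots a \<subseteq> {s. cubic a s = 0} - {r0}"
    using r0 by (auto simp: cubic_roots_def)
  then have "card (cubic_roots a) \<le> card ({s. cubic a s = 0} - {r0})"
    by (intro card_mono) (simp_all add: finite_cubic_zeros)
  also have "\<dots> \<le> 2"
    using r0 card_cubic_zeros_le_3[of a] finite_cubic_zeros[of a] by (simp add: card_Diff_singleton)
  finally have "card (cubic_roots a) \<le> 2" .
  moreover have "{r1, r2} \<subseteq> cubic_roots a"
    using r1 r2 p by (auto simp: cubic_roots_def)
  then have "card {r1, r2} \<le> card (cubic_roots a)"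
    by (intro card_mono finite_cubic_roots)
  then have "2 \<le> card (cubic_roots a)"
    using r1 r2 by simp
  ultimately show ?thesis
    by simp
qed

lemma card_cubic_roots:
  assumes a: "a > 5/2"
  shows "card (cubic_roots a) = (if disc a < 0 then 0 else if disc a = 0 then 1 else 2)"
proof -
  define p where "p = cubic_crit a"
  have p: "2 < p" "p < a + 1 / a"
    using cubic_crit_bounds[OF a] by (simp_all add: p_def)
  have below: "cubic a s < cubic a p" if "s > 2" "s \<noteq> p" for s
    using cubic_less_cubic_crit[of s a] that by (simp add: p_def)
  have sgn: "sgn (cubic a p) = sgn (disc a)"
    using sgn_cubic_crit[of a] a by (simp add: p_def)
  consider "disc a < 0" | "disc a = 0" | "disc a > 0"
    by linarith
  then show ?thesis
  proof cases
    case 1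
    then have "cubic a p < 0"
      using sgn by (simp add: sgn_if split: if_splits)
    then have "cubic_roots a = {}"
      using below by (force simp: cubic_roots_def)
    then show ?thesis
      using 1 by simp
  next
    case 2
    then have "cubic a p = 0"
      using sgn by (simp add: sgn_if split: if_splits)
    then have "cubic_roots a = {p}"
      using below p by (force simp: cubic_roots_def)
    then show ?thesis
      using 2 by simp
  next
    case 3
    then have "cubic a p > 0"
      using sgn by (simp add: sgn_if split: if_splits)
    then show ?thesis
      using 3 card_cubic_roots_if_crit_pos[OF a] by (simp add: p_def)
  qed
qed

lemma disc_neg:
  assumes "5/2 \<le> a" "a \<le> 26/5"
  shows "disc a < 0"
proof -
  have "(a - 26/5) * (4 * a - 11/5) \<le> 0"
    using assms by (intro mult_nonpos_nonneg) auto
  then have "4 * a\<^sup>2 - 23 * a - 18 \<le> -29"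
    by (simp add: power2_eq_square algebra_simps)
  moreover have a3: "a ^ 3 \<ge> 125/8"
    using power_mono[of "5/2" a 3] assms by (simp add: power_divide)
  ultimately have "a ^ 3 * (4 * a\<^sup>2 - 23 * a - 18) \<le> a ^ 3 * (-29)"
    using assms by (intro mult_left_mono) auto
  moreover have "a\<^sup>2 \<le> (26/5)\<^sup>2"
    using assms by (intro power_mono) auto
  moreover have "disc a = a ^ 3 * (4 * a\<^sup>2 - 23 * a - 18) + 13 * a\<^sup>2 + 32"
    by (simp add: disc_def power2_eq_square power_numeral_reduce algebra_simps)
  ultimately show ?thesis
    using a3 by (simp add: power_divide)
qed

lemma disc_strict_mono:
  assumes "26/5 \<le> u" "u < v"
  shows "disc u < disc v"
proof (rule DERIV_pos_imp_increasing[OF assms(2)])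
  fix x assume "u \<le> x" "x \<le> v"
  then have x: "x \<ge> 26/5"
    using assms by simp
  have "(disc has_real_derivative 20 * x ^ 4 - 92 * x ^ 3 - 54 * x\<^sup>2 + 26 * x) (at x)"
    unfolding disc_def[abs_def]
    by (auto intro!: derivative_eq_intros simp: power_numeral_reduce algebra_simps)
  moreover have "20 * x ^ 4 - 92 * x ^ 3 - 54 * x\<^sup>2 + 26 * x > 0"
  proof -
    have "x\<^sup>2 * (20 * x - 92) \<ge> x\<^sup>2 * 12" "x * (12 * x - 54) \<ge> x * (42/5)"
      using x by (intro mult_left_mono; simp)+
    moreover have "20 * x ^ 3 - 92 * x\<^sup>2 = x\<^sup>2 * (20 * x - 92)" "12 * x\<^sup>2 - 54 * x = x * (12 * x - 54)"
      by (simp_all add: power2_eq_square power3_eq_cube algebra_simps)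
    ultimately have "20 * x ^ 3 - 92 * x\<^sup>2 - 54 * x + 26 > 0"
      using x by linarith
    then have "x * (20 * x ^ 3 - 92 * x\<^sup>2 - 54 * x + 26) > 0"
      using x by simp
    then show ?thesis
      by (simp add: power_numeral_reduce algebra_simps)
  qed
  ultimately show "\<exists>y. DERIV disc x :> y \<and> y > 0"
    by blast
qed

lemma disc_sign_change:
  obtains c where "6.37 < c" "c < 6.38" "disc c = 0"
    "\<And>a. 5/2 \<le> a \<Longrightarrow> a < c \<Longrightarrow> disc a < 0" "\<And>a. c < a \<Longrightarrow> disc a > 0"
proof -
  have low: "disc 6.37 < 0" and high: "disc 6.38 > 0"
    by (simp_all add: disc_def power_divide)
  have "continuous_on {6.37..6.38} disc"
    unfolding disc_def[abs_def] by (intro continuous_intros)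
  then obtain c where c: "6.37 \<le> c" "c \<le> 6.38" "disc c = 0"
    using IVT'[of disc "6.37" 0 "6.38"] low high by auto
  moreover have "c \<noteq> 6.37" "c \<noteq> 6.38"
    using c(3) low high by (metis less_irrefl)+
  ultimately have "6.37 < c" "c < 6.38"
    by simp_all
  moreover have "disc a < 0" if "5/2 \<le> a" "a < c" for a
    using disc_neg[of a] disc_strict_mono[of a c] that c by (cases "a \<le> 26/5") auto
  moreover have "disc a > 0" if "c < a" for a
    using disc_strict_mono[of c a] that c by auto
  ultimately show thesis
    using that c(3) by blast
qed

lemma card_cubic_roots_threshold:
  obtains c where "6.37 < c" "c < 6.38"
    "\<And>a. a > 1 \<Longrightarrow> card (cubic_roots a) = (if a < c then 0 else if a = c then 1 else 2)"
proof -
  obtain c where c: "6.37 < c" "c < 6.38" "disc c = 0"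
    "\<And>a. 5/2 \<le> a \<Longrightarrow> a < c \<Longrightarrow> disc a < 0" "\<And>a. c < a \<Longrightarrow> disc a > 0"
    using disc_sign_change by blast
  have "card (cubic_roots a) = (if a < c then 0 else if a = c then 1 else 2)" if "a > 1" for a
  proof (cases "a \<le> 5/2")
    case True
    then have "cubic_roots a = {}"
      using cubic_neg_if_le_5_2[OF \<open>a > 1\<close>] by (force simp: cubic_roots_def)
    then show ?thesis
      using True c(1) by simp
  next
    case False
    then show ?thesis
      using card_cubic_roots[of a] c(3) c(4)[of a] c(5)[of a] by (cases a c rule: linorder_cases) auto
  qed
  with c(1,2) show thesis
    using that by blast
qed

theorem theorem3:
  shows "(\<forall>k::nat. \<forall>J \<beta>::real. 1 \<le> k \<and> k \<le> 3 \<and> \<beta> > 0 \<and> alpha J \<beta> > 1 \<longrightarrow>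
            (\<forall>h \<in> WP_Gibbs_I3 k J \<beta>. translation_invariant h))
      \<and> (\<exists>\<alpha>cr::real. 6.37 < \<alpha>cr \<and> \<alpha>cr < 6.38 \<and>
            (\<forall>J \<beta>::real. \<beta> > 0 \<and> alpha J \<beta> > 1 \<longrightarrow>
               (alpha J \<beta> < \<alpha>cr \<longrightarrow> card (WP_Gibbs_I3 4 J \<beta>) = 1) \<and>
               (alpha J \<beta> = \<alpha>cr \<longrightarrow> card (WP_Gibbs_I3 4 J \<beta>) = 3) \<and>
               (alpha J \<beta> > \<alpha>cr \<longrightarrow> card (WP_Gibbs_I3 4 J \<beta>) = 5)))"
proof (intro conjI allI impI ballI)
  fix k :: nat and J \<beta> :: real and h
  assume k: "1 \<le> k \<and> k \<le> 3 \<and> \<beta> > 0 \<and> alpha J \<beta> > 1" and h: "h \<in> WP_Gibbs_I3 k J \<beta>"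
  have "k \<in> {1, 2, 3}"
    using k by auto
  then show "translation_invariant h"
    using I3_solution_translation_invariant[OF _ abs_theta_less_1] k h
    unfolding WP_Gibbs_I3_def alpha_def by blast
next
  obtain c where "6.37 < c" "c < 6.38"
    "\<And>a. a > 1 \<Longrightarrow> card (cubic_roots a) = (if a < c then 0 else if a = c then 1 else 2)"
    using card_cubic_roots_threshold by blast
  then show "\<exists>\<alpha>cr::real. 6.37 < \<alpha>cr \<and> \<alpha>cr < 6.38 \<and>
            (\<forall>J \<beta>::real. \<beta> > 0 \<and> alpha J \<beta> > 1 \<longrightarrow>
               (alpha J \<beta> < \<alpha>cr \<longrightarrow> card (WP_Gibbs_I3 4 J \<beta>) = 1) \<and>
               (alpha J \<beta> = \<alpha>cr \<longrightarrow> card (WP_Gibbs_I3 4 J \<beta>) = 3) \<and>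
               (alpha J \<beta> > \<alpha>cr \<longrightarrow> card (WP_Gibbs_I3 4 J \<beta>) = 5))"
    using card_WP_Gibbs_I3_4 by (intro exI[of _ c]) auto
qed

end
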